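(* Assume (A1) with $\Omega\supseteq B(x^*,\delta)$, (A2), (A3), (A4) with exponent $r\in(0,1]$, and $\operatorname{rank}J(x)=\operatorname{rank}J(x^* )\ge1$ for all $x\in B(x^*,\delta)$. Let $\{x_k\}$ be generated by LMMSS with $\alpha_k=1$ and $\lambda_k=\|J_k^TF_k\|$ for all $k$. Then there exists $\varepsilon>0$ such that, if $x_0\in B(x^*,\varepsilon)$, the sequence $\{\operatorname{dist}(x_k,X^* )\}$ converges to zero superlinearly (more precisely $\operatorname{dist}(x_{k+1},X^* )\le K\operatorname{dist}(x_k,X^* )^{1+r}$ for a constant $K$, hence quadratically when $r=1$), and $\{x_k\}$ converges to a point of $X^*\cap B(x^*,\delta/2)$.
   Context: Let $F:\mathbb{R}^n\to\mathbb{R}^m$ be twice continuously differentiable with $m\ge n$, $J(x)$ its Jacobian, $\phi(x)=\tfrac12\|F(x)\|^2$, $\nabla\phi(x)=J(x)^TF(x)$. Norms are Euclidean/spectral. $X^*=\{x: J(x)^TF(x)=0\}\neq\emptyset$; $\operatorname{dist}(x,X^* )=\inf_{z\in X^*}\|x-z\|$. Fix $x^*\in X^*$; $B(x^*,\delta)$ is the closed ball. $L\in\mathbb{R}^{p\times n}$ has rank $p\le n$. LMMSS iteration: given $x_k$ and $\lambda_k>0$, with $F_k=F(x_k)$, $J_k=J(x_k)$, let $d_k$ solve $(J_k^TJ_k+\lambda_kL^TL)d_k=-J_k^TF_k$ and $x_{k+1}=x_k+\alpha_kd_k$. (A1) there are $\Omega$ and $\gamma>0$ with $\|J(x)v\|^2+\|Lv\|^2\ge\gamma\|v\|^2$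 for $x\in\Omega$, all $v$. (A2) $\delta\in(0,1)$, $L_0>0$ with $\|J(x)-J(y)\|\le L_0\|x-y\|$ on $B(x^*,\delta)$. (A3) $\omega>0$ with $\omega\operatorname{dist}(x,X^* )\le\|J(x)^TF(x)\|$ on $B(x^*,\delta)$. (A4) $r\in(0,1]$, $C\ge0$ with $\|(J(x)-J(z))^TF(z)\|\le C\|x-z\|^{1+r}$ for $x\in B(x^*,\delta)$, $z\in X^*\cap B(x^*,\delta)$. *)

theory Defs
  imports "HOL-Analysis.Analysis"
begin

definition specnorm :: "real^'n^'m \<Rightarrow> real" where
  "specnorm A = onorm (\<lambda>v. A *v v)"

definition Xstar :: "(real^'n \<Rightarrow> real^'m) \<Rightarrow> (real^'n \<Rightarrow> real^'n^'m) \<Rightarrow> (real^'n) set" where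
  "Xstar F J = {x. transpose (J x) *v F x = 0}"

text \<open>If lambda = 0 (i.e. x already
  stationary, so the method has terminated) the iterate stays put (d = 0).\<close>
definition lmmss_step ::
  "(real^'n \<Rightarrow> real^'m) \<Rightarrow> (real^'n \<Rightarrow> real^'n^'m) \<Rightarrow> real^'n^'p \<Rightarrow> real \<Rightarrow>
   real^'n \<Rightarrow> real^'n \<Rightarrow> real^'n \<Rightarrow> bool" where
  "lmmss_step F J L lam x d x' \<longleftrightarrow>
     (transpose (J x) ** J x + lam *\<^sub>R (transpose L ** L)) *v d = - (transpose (J x) *v F x)
     \<and> (lam = 0 \<longrightarrow> d = 0)
     \<and> x' = x + d"

end

theory Submission
  imports Defs
begin

text \<open>Constant rank of J near x* makes J(x) uniformly injective on the range of J(x)^T.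
  Splitting an LMMSS step d along range J(x)^T and ker J(x), this controls the first
  component directly and the second one through (A1), so that
  |d| = O(dist(x, X*)), because J^T F vanishes at the nearest stationary point.
  Expanding J(x + d)^T F(x + d) around x and around that stationary point, the normal
  equation with lambda = |J(x)^T F(x)|, the Lipschitz bound (A2) and (A4) show that the
  gradient at x + d is O(dist(x, X*)^(1+r)); the error bound (A3) turns this into
  dist(x + d, X*) <= K dist(x, X*)^(1+r). Started close enough to x*, the distances
  halve at every step, so the steps are summable, the iterates stay in a small ball and
  converge to a point at distance zero from the closed set X*.\<close>

lemma specnorm_nonneg: "0 \<le> specnorm A"
  unfolding specnorm_def by (rule onorm_pos_le) simp

lemma norm_matrix_vector_le: "norm (A *v v) \<le> specnorm A * norm v"
  unfolding specnorm_def by (rule onorm) simp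

lemma specnorm_le:
  assumes "\<And>v. norm (A *v v) \<le> b * norm v"
  shows "specnorm A \<le> b"
  unfolding specnorm_def using assms by (rule onorm_le)

lemma specnorm_add_le: "specnorm (A + B) \<le> specnorm A + specnorm B"
  unfolding specnorm_def matrix_vector_mult_add_rdistrib
  by (rule onorm_triangle) simp_all

lemma inner_transpose: "(transpose A *v x) \<bullet> y = x \<bullet> ((A::real^'n^'m) *v y)"
  by (simp add: dot_lmul_matrix)

lemma transpose_diff: "transpose (A - B) = transpose A - transpose B"
  by (simp add: transpose_def vec_eq_iff)

lemma specnorm_transpose_le: "specnorm (transpose (A::real^'n^'m)) \<le> specnorm A"
proof (rule specnorm_le)
  fix w
  define u where "u = transpose A *v w"
  have "norm u * norm u = w \<bullet> (A *v u)"
    unfolding u_def by (simp only: inner_transpose flip: dot_square_norm power2_eq_square)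
  also have "\<dots> \<le> norm w * (specnorm A * norm u)"
    using norm_cauchy_schwarz norm_matrix_vector_le
    by (metis mult_left_mono norm_ge_zero order_trans)
  finally have "norm u * norm u \<le> (specnorm A * norm w) * norm u"
    by (simp add: ac_simps)
  then have "norm u \<le> specnorm A * norm w"
    using mult_right_le_imp_le[of "norm u" _ "norm u"] specnorm_nonneg[of A]
    by (cases "u = 0") auto
  then show "norm (transpose A *v w) \<le> specnorm A * norm w"
    by (simp only: u_def)
qed

lemma specnorm_transpose [simp]: "specnorm (transpose (A::real^'n^'m)) = specnorm A"
  using specnorm_transpose_le[of A] specnorm_transpose_le[of "transpose A"] by simp

lemma norm_transpose_vector_le: "norm (transpose A *v w) \<le> specnorm (A::real^'n^'m) * norm w"
  using norm_matrix_vector_le[of "transpose A"] by simp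

section \<open>Uniform injectivity under constant rank\<close>

lemma transpose_bounded_below_on_range:
  fixes A :: "real^'n^'m"
  obtains c where "c > 0" "\<And>w. w \<in> range ((*v) A) \<Longrightarrow> c * norm w \<le> norm (transpose A *v w)"
proof -
  let ?W = "range ((*v) A)"
  have W: "subspace ?W"
    by (simp add: subspace_UNIV linear_subspace_image)
  have "w = 0" if w: "w \<in> ?W" and w0: "transpose A *v w = 0" for w
  proof -
    obtain a where "w = A *v a" using w by blast
    then have "w \<bullet> w = (transpose A *v w) \<bullet> a" by (simp only: inner_transpose)
    with w0 show "w = 0" by simp
  qed
  then show ?thesis
    using injective_imp_isometric[OF closed_subspace[OF W] W matrix_vector_mul_bounded_linear] that
    by blast
qed

lemma transpose_image_eq_range:
  fixes A :: "real^'n^'m"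
  assumes W: "subspace W" and inj: "inj_on ((*v) (transpose A)) W" and dim: "dim W = rank A"
  shows "(*v) (transpose A) ` W = range ((*v) (transpose A))"
proof (rule subspace_dim_equal)
  let ?f = "(*v) (transpose A)"
  show "subspace (?f ` W)"
    by (rule linear_subspace_image[OF matrix_vector_mul_linear W])
  show "subspace (range ?f)"
    by (rule linear_subspace_image[OF matrix_vector_mul_linear subspace_UNIV])
  have "dim (?f ` W) = dim W"
    by (rule dim_image_eq[OF matrix_vector_mul_linear]) (simp only: span_eq_iff[THEN iffD2, OF W] inj)
  also have "\<dots> = dim (range ?f)"
    by (simp only: dim rank_dim_range[symmetric] rank_transpose)
  finally show "dim (range ?f) \<le> dim (?f ` W)"
    by (rule eq_refl[OF sym])
qed blast

lemma norm_mult_transpose_ge: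
  fixes A :: "real^'n^'m"
  assumes W: "subspace W" and \<sigma>: "\<sigma> > 0"
    and below: "\<And>w. w \<in> W \<Longrightarrow> \<sigma> * norm w \<le> norm (transpose A *v w)"
    and dim: "dim W = rank A"
  shows "\<sigma> * norm (transpose A *v a) \<le> norm (A *v (transpose A *v a))"
proof -
  let ?f = "(*v) (transpose A)"
  have "inj_on ?f W"
  proof (rule inj_onI)
    fix u v assume "u \<in> W" "v \<in> W" "?f u = ?f v"
    then have "u - v \<in> W" "?f (u - v) = 0"
      using W by (auto simp: subspace_diff matrix_vector_mult_diff_distrib simp del: transpose_matrix_vector)
    then show "u = v" using below[of "u - v"] \<sigma> by (simp add: mult_le_0_iff)
  qed
  then obtain w where w: "w \<in> W" "?f a = ?f w"
    using transpose_image_eq_range[OF W _ dim] by (metis rangeI imageE)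
  define u where "u = ?f w"
  have "norm u * norm u = w \<bullet> (A *v u)"
    unfolding u_def by (simp only: inner_transpose flip: dot_square_norm power2_eq_square)
  also have "\<dots> \<le> norm w * norm (A *v u)"
    by (rule norm_cauchy_schwarz)
  finally have "\<sigma> * norm u * norm u \<le> (\<sigma> * norm w) * norm (A *v u)"
    using \<sigma> by (simp add: mult.assoc mult_left_mono)
  also have "\<dots> \<le> norm u * norm (A *v u)"
    using below[OF w(1)] by (simp add: u_def mult_right_mono)
  finally have "\<sigma> * norm u \<le> norm (A *v u)"
    using mult_right_le_imp_le[of "\<sigma> * norm u" "norm u" "norm (A *v u)"]
    by (cases "u = 0") (auto simp: mult.commute)
  then show ?thesis
    using w(2) by (simp add: u_def)
qed

text \<open>For x near xs, J(x)^T remains bounded below on range (J xs) by perturbation;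
  as the ranks agree, it maps this subspace onto its whole range.\<close>

lemma constant_rank_uniform_bound:
  fixes J :: "real^'n \<Rightarrow> real^'n^'m"
  assumes L0: "L0 > 0" and \<delta>: "\<delta> > 0"
    and lip: "\<And>x. x \<in> cball xs \<delta> \<Longrightarrow> specnorm (J x - J xs) \<le> L0 * norm (x - xs)"
    and rank: "\<And>x. x \<in> cball xs \<delta> \<Longrightarrow> rank (J x) = rank (J xs)"
  obtains \<rho> \<sigma> where "0 < \<rho>" "\<rho> \<le> \<delta>" "0 < \<sigma>"
    "\<And>x a. x \<in> cball xs \<rho> \<Longrightarrow>
       \<sigma> * norm (transpose (J x) *v a) \<le> norm (J x *v (transpose (J x) *v a))"
proof -
  let ?W = "range ((*v) (J xs))"
  obtain c where c: "c > 0" "\<And>w. w \<in> ?W \<Longrightarrow> c * norm w \<le> norm (transpose (J xs) *v w)"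
    using transpose_bounded_below_on_range[of "J xs"] by blast
  define \<rho> where "\<rho> = min \<delta> (c / (2 * L0))"
  have "c / 2 * norm (transpose (J x) *v a) \<le> norm (J x *v (transpose (J x) *v a))"
    if x: "x \<in> cball xs \<rho>" for x a
  proof (rule norm_mult_transpose_ge)
    have x\<delta>: "x \<in> cball xs \<delta>" and "L0 * norm (x - xs) \<le> c / 2"
      using x L0 by (auto simp: \<rho>_def dist_norm norm_minus_commute field_simps)
    then have perturb: "specnorm (J x - J xs) \<le> c / 2"
      using lip by (meson order_trans)
    show "c / 2 * norm w \<le> norm (transpose (J x) *v w)" if "w \<in> ?W" for w
    proof -
      have "transpose (J xs) *v w = transpose (J x) *v w - transpose (J x - J xs) *v w"
        by (simp add: transpose_diff matrix_vector_mult_diff_rdistrib del: transpose_matrix_vector)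
      then have "norm (transpose (J xs) *v w) \<le> norm (transpose (J x) *v w) + c / 2 * norm w"
        using norm_triangle_ineq4 norm_transpose_vector_le[of "J x - J xs" w] perturb
        by (smt (verit, best) mult_right_mono norm_ge_zero)
      with c(2)[OF that] show ?thesis by simp
    qed
    show "dim ?W = rank (J x)"
      using rank[OF x\<delta>] by (simp add: rank_dim_range)
  qed (use c in \<open>auto intro: linear_subspace_image subspace_UNIV\<close>)
  moreover have "0 < \<rho>" "\<rho> \<le> \<delta>"
    using \<delta> c L0 by (auto simp: \<rho>_def)
  ultimately show ?thesis
    using that c(1) by (metis half_gt_zero)
qed

lemma lipschitz_of_jacobian_bound:
  fixes F :: "real^'n \<Rightarrow> real^'m"
  assumes F_deriv: "\<And>x. (F has_derivative (\<lambda>h. J x *v h)) (at x)"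
    and S: "convex S" "x \<in> S" "y \<in> S"
    and bound: "\<And>z. z \<in> S \<Longrightarrow> specnorm (J z) \<le> K"
  shows "norm (F y - F x) \<le> K * norm (y - x)"
  using differentiable_bound[OF S(1) has_derivative_at_withinI[OF F_deriv] _ S(3,2)] bound
  by (simp add: specnorm_def)

lemma linearization_error_le:
  fixes F :: "real^'n \<Rightarrow> real^'m"
  assumes F_deriv: "\<And>x. (F has_derivative (\<lambda>h. J x *v h)) (at x)"
    and S: "convex S" "x \<in> S" "y \<in> S"
    and lip: "\<And>z. z \<in> S \<Longrightarrow> specnorm (J z - J x) \<le> L0 * norm (z - x)" and "L0 \<ge> 0"
  shows "norm (F y - F x - J x *v (y - x)) \<le> L0 * norm (y - x)^2"
proof -
  have segment: "closed_segment x y \<subseteq> S"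
    using S by (simp add: closed_segment_subset)
  have "norm (F y - F x - J x *v (y - x)) \<le> norm (y - x) * (L0 * norm (y - x))"
  proof (rule differentiable_bound_linearization[where S = "closed_segment x y"
        and f' = "\<lambda>z h. J z *v h"])
    show "x + t *\<^sub>R (y - x) \<in> closed_segment x y" if "t \<in> {0..1}" for t
      using that by (auto simp: in_segment algebra_simps intro!: exI[of _ t])
    show "(F has_derivative (\<lambda>h. J z *v h)) (at z within closed_segment x y)" for z
      by (rule has_derivative_at_withinI[OF F_deriv])
    show "onorm ((\<lambda>h. J z *v h) - (\<lambda>h. J x *v h)) \<le> L0 * norm (y - x)"
      if z: "z \<in> closed_segment x y" for z
    proof -
      have "specnorm (J z - J x) \<le> L0 * norm (z - x)"
        using lip segment z by blast
      also have "\<dots> \<le> L0 * norm (y - x)"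
        using segment_bound1[OF z] \<open>L0 \<ge> 0\<close> by (simp add: mult_left_mono)
      finally show ?thesis
        by (simp add: specnorm_def fun_diff_def matrix_vector_mult_diff_rdistrib)
    qed
  qed (rule ends_in_segment)
  then show ?thesis
    by (simp add: power2_eq_square ac_simps)
qed

lemma closed_Xstar:
  fixes F :: "real^'n \<Rightarrow> real^'m" and J :: "real^'n \<Rightarrow> real^'n^'m"
  assumes "continuous_on UNIV F" "continuous_on UNIV J"
  shows "closed (Xstar F J)"
proof -
  have "(\<lambda>x. transpose (J x) *v F x) = (\<lambda>x. \<chi> i. \<Sum>j\<in>UNIV. J x $ j $ i * F x $ j)"
    by (simp add: matrix_vector_mult_def transpose_def del: transpose_matrix_vector)
  then have "continuous_on UNIV (\<lambda>x. transpose (J x) *v F x)"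
    by (simp only:) (intro continuous_intros assms)
  then show ?thesis
    by (simp add: Xstar_def closed_Collect_eq del: transpose_matrix_vector)
qed

lemma infdist_attained_near:
  fixes X :: "'a::heine_borel set"
  assumes "closed X" "xs \<in> X" "x \<in> cball xs \<rho>"
  obtains xb where "xb \<in> X" "infdist x X = dist x xb" "xb \<in> cball xs (2 * \<rho>)"
proof -
  obtain xb where xb: "xb \<in> X" "infdist x X = dist x xb"
    using infdist_attains_inf[OF assms(1)] assms(2) by blast
  have "dist x xb \<le> dist x xs"
    using infdist_le[OF assms(2), of x] xb(2) by simp
  then have "dist xs xb \<le> 2 * \<rho>"
    using assms(3) dist_triangle[of xs xb x] by (simp add: dist_commute)
  with xb that show ?thesis by simp
qed

lemma norm_gradient_le_dist_stationary:
  fixes F :: "real^'n \<Rightarrow> real^'m"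
  assumes F_deriv: "\<And>x. (F has_derivative (\<lambda>h. J x *v h)) (at x)"
    and S: "convex S" "x \<in> S" "xb \<in> S"
    and jac: "\<And>z. z \<in> S \<Longrightarrow> specnorm (J z) \<le> KJ"
    and lip: "specnorm (J x - J xb) \<le> L0 * norm (x - xb)"
    and F_bound: "norm (F xb) \<le> KF"
    and stationary: "transpose (J xb) *v F xb = 0"
  shows "norm (transpose (J x) *v F x) \<le> (KJ^2 + L0 * KF) * norm (x - xb)"
proof -
  have "transpose (J x) *v F x = transpose (J x) *v (F x - F xb) + transpose (J x - J xb) *v F xb"
    using stationary
    by (simp add: transpose_diff matrix_vector_mult_diff_distrib matrix_vector_mult_diff_rdistrib
        del: transpose_matrix_vector)
  also have "norm \<dots> \<le> KJ * (KJ * norm (x - xb)) + L0 * norm (x - xb) * KF"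
  proof (rule norm_triangle_le[OF add_mono])
    have "KJ \<ge> 0"
      using jac[OF S(2)] specnorm_nonneg order_trans by blast
    then show "norm (transpose (J x) *v (F x - F xb)) \<le> KJ * (KJ * norm (x - xb))"
      using norm_transpose_vector_le[of "J x" "F x - F xb"] jac[OF S(2)]
        lipschitz_of_jacobian_bound[OF F_deriv S(1,3,2) jac]
      by (smt (verit, best) mult_mono norm_ge_zero)
    show "norm (transpose (J x - J xb) *v F xb) \<le> L0 * norm (x - xb) * KF"
      using norm_transpose_vector_le[of "J x - J xb" "F xb"] lip F_bound
      by (smt (verit, best) mult_mono norm_ge_zero specnorm_nonneg)
  qed
  finally show ?thesis
    by (simp add: power2_eq_square algebra_simps)
qed

section \<open>Levenberg--Marquardt steps\<close>

lemma decompose_range_transpose_null: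
  fixes A :: "real^'n^'m"
  obtains a z where "d = transpose A *v a + z" "A *v z = 0"
proof -
  let ?S = "range ((*v) (transpose A))"
  obtain y z where yz: "y \<in> span ?S" "\<And>w. w \<in> span ?S \<Longrightarrow> orthogonal z w" "d = y + z"
    using orthogonal_subspace_decomp_exists by blast
  have "subspace ?S"
    by (rule linear_subspace_image[OF matrix_vector_mul_linear subspace_UNIV])
  then obtain a where a: "y = transpose A *v a"
    using yz(1) span_eq_iff[of ?S] by blast
  have "orthogonal z (transpose A *v (A *v z))"
    by (rule yz(2)[OF span_base[OF rangeI]])
  then have "(transpose A *v (A *v z)) \<bullet> z = 0"
    by (simp add: orthogonal_def inner_commute del: transpose_matrix_vector)
  then have "(A *v z) \<bullet> (A *v z) = 0"
    by (simp only: inner_transpose)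
  then show ?thesis
    using that a yz(3) by simp
qed

lemma lm_range_component_le:
  fixes A :: "real^'n^'m" and L :: "real^'n^'p"
  assumes normal: "transpose A *v (A *v d) + \<mu> *\<^sub>R (transpose L *v (L *v d)) = - (transpose A *v f)"
    and "\<mu> \<ge> 0" and d: "d = y + z" and null: "A *v z = 0"
    and \<sigma>: "\<sigma> > 0" "\<sigma> * norm y \<le> norm (A *v y)"
  shows "\<sigma>^2 * norm y \<le> norm (transpose A *v f)"
proof -
  let ?e = "transpose A *v f"
  have Ad: "A *v d = A *v y"
    using d null by (simp add: matrix_vector_right_distrib)
  have "norm (A *v y)^2 + \<mu> * norm (L *v d)^2 = - (?e \<bullet> y)"
    using arg_cong[OF normal, of "\<lambda>v. v \<bullet> d"]
    by (simp only: inner_add_left inner_scaleR_left inner_transpose inner_minus_left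
        power2_norm_eq_inner Ad)
  moreover have "0 \<le> \<mu> * norm (L *v d)^2"
    using \<open>\<mu> \<ge> 0\<close> by simp
  moreover have "- (?e \<bullet> y) \<le> norm ?e * norm y"
    using norm_cauchy_schwarz[of "- ?e" y] by (simp only: inner_minus_left norm_minus_cancel)
  ultimately have "norm (A *v y)^2 \<le> norm ?e * norm y"
    by linarith
  moreover have "(\<sigma> * norm y)^2 \<le> norm (A *v y)^2"
    using \<sigma> by (intro power_mono) auto
  ultimately have "(\<sigma>^2 * norm y) * norm y \<le> norm ?e * norm y"
    by (simp add: power2_eq_square algebra_simps)
  then show ?thesis
    using mult_right_le_imp_le[of "\<sigma>^2 * norm y" "norm y" "norm ?e"]
    by (cases "y = 0") auto
qed

lemma lm_null_component_le:
  fixes A :: "real^'n^'m" and L :: "real^'n^'p"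
  assumes normal: "transpose A *v (A *v d) + \<mu> *\<^sub>R (transpose L *v (L *v d)) = - (transpose A *v f)"
    and "\<mu> > 0" and d: "d = y + z" and null: "A *v z = 0"
    and \<gamma>: "\<gamma> > 0" "\<gamma> * norm z^2 \<le> norm (A *v z)^2 + norm (L *v z)^2"
  shows "norm z \<le> (1 + specnorm L^2 / \<gamma>) * norm y"
proof -
  define q where "q = specnorm L^2 / \<gamma>"
  have q: "q \<ge> 0"
    using \<gamma>(1) by (simp add: q_def)
  have "\<mu> * ((L *v d) \<bullet> (L *v z)) = 0"
    using arg_cong[OF normal, of "\<lambda>v. v \<bullet> z"] null
    by (simp only: inner_add_left inner_scaleR_left inner_transpose inner_minus_left
        inner_zero_right)
  then have "(L *v y) \<bullet> (L *v z) + norm (L *v z)^2 = 0"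
    using \<open>\<mu> > 0\<close> d
    by (simp add: matrix_vector_right_distrib inner_add_left power2_norm_eq_inner)
  then have "norm (L *v z) * norm (L *v z) \<le> norm (L *v y) * norm (L *v z)"
    using norm_cauchy_schwarz[of "- (L *v y)" "L *v z"]
    by (simp add: inner_minus_left power2_eq_square)
  then have Lz: "norm (L *v z) \<le> norm (L *v y)"
    using mult_right_le_imp_le[of "norm (L *v z)" "norm (L *v z)" "norm (L *v y)"]
    by (cases "L *v z = 0") auto
  have "\<gamma> * norm z^2 \<le> norm (L *v z)^2"
    using \<gamma>(2) null by simp
  also have "\<dots> \<le> (specnorm L * norm y)^2"
    using Lz norm_matrix_vector_le[of L y] by (meson norm_ge_zero order_trans power_mono)
  finally have "norm z^2 \<le> q * norm y^2"
    using \<gamma>(1) by (simp add: q_def field_simps power_mult_distrib)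
  also have "\<dots> \<le> (1 + q)^2 * norm y^2"
  proof (rule mult_right_mono)
    have "1 + q \<le> (1 + q)^2"
      by (rule self_le_power) (use q in simp_all)
    then show "q \<le> (1 + q)^2"
      by linarith
  qed simp
  also have "\<dots> = ((1 + q) * norm y)^2"
    by (simp only: power_mult_distrib)
  finally show ?thesis
    unfolding q_def[symmetric] by (rule power2_le_imp_le) (use q in simp_all)
qed

lemma lm_step_norm_le:
  fixes A :: "real^'n^'m" and L :: "real^'n^'p"
  assumes step: "(transpose A ** A + \<mu> *\<^sub>R (transpose L ** L)) *v d = - (transpose A *v f)"
    and "\<mu> > 0"
    and \<gamma>: "\<gamma> > 0" "\<And>v. \<gamma> * norm v^2 \<le> norm (A *v v)^2 + norm (L *v v)^2"
    and \<sigma>: "\<sigma> > 0" "\<And>a. \<sigma> * norm (transpose A *v a) \<le> norm (A *v (transpose A *v a))"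
  shows "norm d \<le> (2 + specnorm L^2 / \<gamma>) / \<sigma>^2 * norm (transpose A *v f)"
proof -
  have normal: "transpose A *v (A *v d) + \<mu> *\<^sub>R (transpose L *v (L *v d)) = - (transpose A *v f)"
    using step
    by (simp only: matrix_vector_mult_add_rdistrib scaleR_matrix_vector_assoc matrix_vector_mul_assoc)
  obtain a z where d: "d = transpose A *v a + z" and null: "A *v z = 0"
    by (rule decompose_range_transpose_null)
  define y where "y = transpose A *v a"
  have y: "norm y \<le> norm (transpose A *v f) / \<sigma>^2"
    using lm_range_component_le[OF normal _ d[folded y_def] null \<sigma>(1)] \<sigma> \<open>\<mu> > 0\<close>
    by (simp add: y_def pos_le_divide_eq mult.commute)
  have "norm z \<le> (1 + specnorm L^2 / \<gamma>) * norm y"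
    using lm_null_component_le[OF normal \<open>\<mu> > 0\<close> d[folded y_def] null \<gamma>(1) \<gamma>(2)[of z]] .
  then have "norm d \<le> (2 + specnorm L^2 / \<gamma>) * norm y"
    using norm_triangle_ineq[of y z] d by (simp add: y_def algebra_simps)
  also have "\<dots> \<le> (2 + specnorm L^2 / \<gamma>) * (norm (transpose A *v f) / \<sigma>^2)"
    using y \<gamma>(1) by (intro mult_left_mono) simp_all
  finally show ?thesis
    by simp
qed

lemma lmmss_step_le:
  fixes F :: "real^'n \<Rightarrow> real^'m" and J :: "real^'n \<Rightarrow> real^'n^'m" and L :: "real^'n^'p"
  assumes step: "lmmss_step F J L (norm (transpose (J x) *v F x)) x d y"
    and \<gamma>: "\<gamma> > 0" "\<And>v. \<gamma> * norm v^2 \<le> norm (J x *v v)^2 + norm (L *v v)^2"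
    and \<sigma>: "\<sigma> > 0" "\<And>a. \<sigma> * norm (transpose (J x) *v a) \<le> norm (J x *v (transpose (J x) *v a))"
  shows "norm d \<le> (2 + specnorm L^2 / \<gamma>) / \<sigma>^2 * norm (transpose (J x) *v F x)"
proof (cases "norm (transpose (J x) *v F x) = 0")
  case True
  then show ?thesis
    using step by (simp add: lmmss_step_def del: transpose_matrix_vector)
next
  case False
  have "(transpose (J x) ** J x + norm (transpose (J x) *v F x) *\<^sub>R (transpose L ** L)) *v d
        = - (transpose (J x) *v F x)"
    using step by (simp add: lmmss_step_def del: transpose_matrix_vector)
  from lm_step_norm_le[OF this _ \<gamma> \<sigma>] False show ?thesis
    by simp
qed

lemma norm_lm_residual_le:
  fixes A :: "real^'n^'m" and L :: "real^'n^'p"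
  assumes normal: "transpose A *v (A *v d) + \<mu> *\<^sub>R (transpose L *v (L *v d)) = - (transpose A *v f)"
    and "\<mu> \<ge> 0"
  shows "norm (transpose A *v (A *v d) + transpose A *v f) \<le> \<mu> * specnorm L^2 * norm d"
proof -
  have "transpose A *v (A *v d) + transpose A *v f = - (\<mu> *\<^sub>R (transpose L *v (L *v d)))"
    using normal by (simp add: eq_neg_iff_add_eq_0 add.commute add.left_commute del: transpose_matrix_vector)
  then have "norm (transpose A *v (A *v d) + transpose A *v f) = \<mu> * norm (transpose L *v (L *v d))"
    using \<open>\<mu> \<ge> 0\<close> by (simp del: transpose_matrix_vector)
  also have "\<dots> \<le> \<mu> * (specnorm L * (specnorm L * norm d))"
    using norm_transpose_vector_le[of L "L *v d"] norm_matrix_vector_le[of L d] \<open>\<mu> \<ge> 0\<close>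
    by (meson mult_left_mono order_trans specnorm_nonneg)
  finally show ?thesis
    by (simp add: power2_eq_square ac_simps)
qed

lemma norm_gradient_after_step_le:
  fixes F :: "real^'n \<Rightarrow> real^'m" and J :: "real^'n \<Rightarrow> real^'n^'m" and L :: "real^'n^'p"
  assumes F_deriv: "\<And>x. (F has_derivative (\<lambda>h. J x *v h)) (at x)"
    and S: "convex S" "x \<in> S" "y \<in> S" "xb \<in> S"
    and lip: "\<And>u v. u \<in> S \<Longrightarrow> v \<in> S \<Longrightarrow> specnorm (J u - J v) \<le> L0 * norm (u - v)" "L0 \<ge> 0"
    and jac: "\<And>z. z \<in> S \<Longrightarrow> specnorm (J z) \<le> KJ"
    and normal: "transpose (J x) *v (J x *v d) + \<mu> *\<^sub>R (transpose L *v (L *v d))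
                   = - (transpose (J x) *v F x)"
    and "\<mu> \<ge> 0" and y: "y = x + d"
  shows "norm (transpose (J y) *v F y)
         \<le> \<mu> * specnorm L^2 * norm d + KJ * L0 * norm d^2
           + norm (transpose (J y - J xb) *v F xb) + norm (transpose (J x - J xb) *v F xb)
           + L0 * KJ * norm d * norm (y - xb)"
proof -
  define R where "R = F y - F x - J x *v d"
  have KJ: "KJ \<ge> 0"
    using jac[OF S(2)] specnorm_nonneg order_trans by blast
  have "norm R \<le> L0 * norm d^2"
    using linearization_error_le[OF F_deriv S(1-3) lip(1)[OF _ S(2)] lip(2)] y
    by (simp add: R_def)
  then have R: "norm (transpose (J x) *v R) \<le> KJ * L0 * norm d^2"
    using norm_transpose_vector_le[of "J x" R] jac[OF S(2)] KJ
    by (smt (verit, best) mult.assoc mult_mono norm_ge_zero)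
  have "specnorm (J y - J x) * norm (F y - F xb) \<le> L0 * norm d * (KJ * norm (y - xb))"
    using lip(1)[OF S(3,2)] lipschitz_of_jacobian_bound[OF F_deriv S(1,4,3) jac] y
    by (intro mult_mono) (simp_all add: specnorm_nonneg lip(2))
  then have cross: "norm (transpose (J y - J x) *v (F y - F xb)) \<le> L0 * KJ * norm d * norm (y - xb)"
    using norm_transpose_vector_le[of "J y - J x" "F y - F xb"] by (simp add: ac_simps)
  have "transpose (J y) *v F y =
      (transpose (J x) *v (J x *v d) + transpose (J x) *v F x) + transpose (J x) *v R
      + transpose (J y - J xb) *v F xb - transpose (J x - J xb) *v F xb
      + transpose (J y - J x) *v (F y - F xb)"
    by (simp add: R_def transpose_diff matrix_vector_mult_diff_distrib matrix_vector_mult_diff_rdistrib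
        matrix_vector_right_distrib algebra_simps del: transpose_matrix_vector)
  also have "norm \<dots> \<le> norm (transpose (J x) *v (J x *v d) + transpose (J x) *v F x)
      + norm (transpose (J x) *v R) + norm (transpose (J y - J xb) *v F xb)
      + norm (transpose (J x - J xb) *v F xb) + norm (transpose (J y - J x) *v (F y - F xb))"
    by (smt (verit) norm_triangle_ineq norm_triangle_ineq4)
  finally show ?thesis
    using norm_lm_residual_le[OF normal \<open>\<mu> \<ge> 0\<close>] R cross by linarith
qed

section \<open>Superlinear convergence of a perturbed iteration\<close>

lemma powr_superlinear_le_half:
  fixes t \<epsilon> K r :: real
  assumes "0 \<le> t" "t \<le> \<epsilon>" "K \<ge> 0" "r > 0" "2 * K * \<epsilon> powr r \<le> 1"
  shows "K * t powr (1 + r) \<le> t / 2"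
proof (cases "t = 0")
  case False
  then have "K * t powr (1 + r) = (K * t powr r) * t"
    using assms(1) by (simp add: powr_add)
  also have "\<dots> \<le> (K * \<epsilon> powr r) * t"
    using assms by (intro mult_right_mono mult_left_mono powr_mono2) simp_all
  also have "\<dots> \<le> t / 2"
    using mult_right_mono[OF assms(5,1)] by simp
  finally show ?thesis .
qed simp

lemma exists_small_radius:
  fixes \<rho> c K r :: real
  assumes "\<rho> > 0" "c \<ge> 0" "K \<ge> 0" "r > 0"
  shows "\<exists>\<epsilon>>0. (1 + 2 * c) * \<epsilon> \<le> \<rho> \<and> \<epsilon> \<le> 1 \<and> 2 * K * \<epsilon> powr r \<le> 1"
proof -
  define \<epsilon> where "\<epsilon> = min (min (\<rho> / (1 + 2 * c)) 1) ((1 / (2 * K + 1)) powr (1 / r))"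
  have "\<epsilon> \<le> \<rho> / (1 + 2 * c)"
    by (simp add: \<epsilon>_def)
  then have radius: "(1 + 2 * c) * \<epsilon> \<le> \<rho>"
    using assms by (simp add: pos_le_divide_eq mult.commute)
  have pos: "\<epsilon> > 0"
    using assms by (simp add: \<epsilon>_def)
  then have "\<epsilon> powr r \<le> ((1 / (2 * K + 1)) powr (1 / r)) powr r"
    using assms by (intro powr_mono2) (simp_all add: \<epsilon>_def)
  then have "2 * K * \<epsilon> powr r \<le> 2 * K * (1 / (2 * K + 1))"
    using assms by (intro mult_left_mono) (simp_all add: powr_powr)
  also have "\<dots> \<le> 1"
    using assms by (simp add: field_simps)
  finally have "2 * K * \<epsilon> powr r \<le> 1" .
  moreover have "\<epsilon> \<le> 1"
    by (simp add: \<epsilon>_def)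
  ultimately show ?thesis
    using pos radius by blast
qed

locale superlinear_iteration =
  fixes X :: "'a::banach set" and xs :: 'a and x d :: "nat \<Rightarrow> 'a"
    and c K r \<rho> \<epsilon> :: real
  assumes closed: "closed X" and center_in: "xs \<in> X"
    and c: "c \<ge> 0" and K: "K \<ge> 0" and r: "r > 0"
    and radius: "(1 + 2 * c) * \<epsilon> \<le> \<rho>" "\<epsilon> \<le> 1" "2 * K * \<epsilon> powr r \<le> 1"
    and start: "x 0 \<in> cball xs \<epsilon>"
    and iterate: "\<And>k. x (Suc k) = x k + d k"
    and step_le: "\<And>k. x k \<in> cball xs \<rho> \<Longrightarrow> norm (d k) \<le> c * infdist (x k) X"
    and dist_le: "\<And>k. x k \<in> cball xs \<rho> \<Longrightarrow> x (Suc k) \<in> cball xs \<rho> \<Longrightarrow> infdist (x k) X \<le> 1 \<Longrightarrow>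
                    infdist (x (Suc k)) X \<le> K * infdist (x k) X powr (1 + r)"
begin

lemma start_dist: "infdist (x 0) X \<le> \<epsilon>"
  using infdist_le[OF center_in, of "x 0"] start by (simp add: dist_commute)

lemma in_ball_if_near_start:
  assumes "norm (x k - x 0) \<le> 2 * c * infdist (x 0) X"
  shows "x k \<in> cball xs \<rho>"
proof -
  have "dist xs (x k) \<le> dist xs (x 0) + norm (x k - x 0)"
    using dist_triangle[of xs "x k" "x 0"] by (simp add: dist_norm norm_minus_commute)
  also have "\<dots> \<le> \<epsilon> + 2 * c * \<epsilon>"
    using start assms start_dist c by (smt (verit) mem_cball mult_left_mono)
  also have "\<dots> \<le> \<rho>"
    using radius(1) by (simp add: algebra_simps)
  finally show ?thesis
    by simp
qed

lemma iterate_invariant: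
  "infdist (x k) X \<le> infdist (x 0) X * (1/2)^k
   \<and> norm (x k - x 0) \<le> 2 * c * infdist (x 0) X * (1 - (1/2)^k)"
proof (induction k)
  case (Suc k)
  let ?t0 = "infdist (x 0) X"
  have t0: "0 \<le> ?t0" "?t0 * (1/2)^k \<le> ?t0"
    by (simp add: infdist_nonneg)
       (rule mult_left_le; simp add: infdist_nonneg power_le_one)
  have "2 * c * ?t0 * (1 - (1/2)^j) \<le> 2 * c * ?t0" for j :: nat
    using c t0(1) by (simp add: mult_left_le)
  then have in_ball: "x j \<in> cball xs \<rho>"
    if "norm (x j - x 0) \<le> 2 * c * ?t0 * (1 - (1/2)^j)" for j
    using that by (meson in_ball_if_near_start order_trans)
  have xk: "x k \<in> cball xs \<rho>"
    using Suc.IH in_ball by blast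
  have tk: "infdist (x k) X \<le> \<epsilon>"
    using Suc.IH t0 start_dist by linarith
  have "norm (d k) \<le> c * (?t0 * (1/2)^k)"
    using step_le[OF xk] Suc.IH c by (meson mult_left_mono order_trans)
  then have dist_start: "norm (x (Suc k) - x 0) \<le> 2 * c * ?t0 * (1 - (1/2)^Suc k)"
    using Suc.IH norm_triangle_ineq[of "x k - x 0" "d k"] iterate[of k]
    by (simp add: algebra_simps)
  have "infdist (x (Suc k)) X \<le> K * infdist (x k) X powr (1 + r)"
    using dist_le[OF xk in_ball[OF dist_start]] tk radius(2) by simp
  also have "\<dots> \<le> infdist (x k) X / 2"
    using powr_superlinear_le_half[OF infdist_nonneg tk K r radius(3)] .
  also have "\<dots> \<le> ?t0 * (1/2)^Suc k"
    using Suc.IH by simp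
  finally show ?case
    using dist_start by simp
qed simp

lemma iterates_in_ball: "x k \<in> cball xs \<rho>"
proof (rule in_ball_if_near_start)
  have "2 * c * infdist (x 0) X * (1 - (1/2)^k) \<le> 2 * c * infdist (x 0) X"
    using c by (simp add: infdist_nonneg mult_left_le)
  then show "norm (x k - x 0) \<le> 2 * c * infdist (x 0) X"
    using iterate_invariant[of k] by linarith
qed

lemma dist_superlinear: "infdist (x (Suc k)) X \<le> K * infdist (x k) X powr (1 + r)"
proof (rule dist_le[OF iterates_in_ball iterates_in_ball])
  have "infdist (x 0) X * (1/2)^k \<le> infdist (x 0) X"
    by (rule mult_left_le) (simp_all add: infdist_nonneg power_le_one)
  then show "infdist (x k) X \<le> 1"
    using iterate_invariant[of k] start_dist radius(2) by linarith
qed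

lemma dist_tendsto_zero: "(\<lambda>k. infdist (x k) X) \<longlonglongrightarrow> 0"
proof (rule Lim_null_comparison)
  show "\<forall>\<^sub>F k in sequentially. norm (infdist (x k) X) \<le> infdist (x 0) X * (1/2)^k"
    using iterate_invariant by (simp add: infdist_nonneg)
  show "(\<lambda>k. infdist (x 0) X * (1/2::real)^k) \<longlonglongrightarrow> 0"
    by (intro tendsto_mult_right_zero LIMSEQ_power_zero) simp
qed

lemma iterates_converge: "\<exists>z \<in> X \<inter> cball xs \<rho>. x \<longlonglongrightarrow> z"
proof -
  have "summable d"
  proof (rule summable_comparison_test')
    show "summable (\<lambda>k. c * (infdist (x 0) X * (1/2::real)^k))"
      by (intro summable_mult summable_geometric) simp
    show "norm (d k) \<le> c * (infdist (x 0) X * (1/2)^k)" for k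
      using step_le[OF iterates_in_ball, of k] mult_left_mono[OF conjunct1[OF iterate_invariant] c]
      by (rule order_trans)
  qed
  have partial_sums: "x = (\<lambda>k. x 0 + (\<Sum>i<k. d i))"
  proof
    show "x k = x 0 + (\<Sum>i<k. d i)" for k
      by (induction k) (simp_all add: iterate algebra_simps)
  qed
  have "(\<lambda>k. x 0 + (\<Sum>i<k. d i)) \<longlonglongrightarrow> x 0 + suminf d"
    by (intro tendsto_add tendsto_const summable_LIMSEQ \<open>summable d\<close>)
  then have lim: "x \<longlonglongrightarrow> x 0 + suminf d"
    by (simp only: partial_sums[symmetric])
  have "x 0 + suminf d \<in> cball xs \<rho>"
    by (rule Lim_in_closed_set[OF closed_cball always_eventually _ lim]) (use iterates_in_ball in auto)
  moreover have "infdist (x 0 + suminf d) X = 0"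
    using LIMSEQ_unique[OF tendsto_infdist[OF lim] dist_tendsto_zero] .
  then have "x 0 + suminf d \<in> X"
    using in_closed_iff_infdist_zero[OF closed] center_in by blast
  ultimately show ?thesis
    using lim by blast
qed

end

lemma power2_le_powr:
  fixes t r :: real
  assumes "0 \<le> t" "t \<le> 1" "r \<le> 1"
  shows "t^2 \<le> t powr (1 + r)"
proof (cases "t = 0")
  case False
  then have "t^2 = t powr 2"
    using assms(1) by (simp add: powr_numeral)
  also have "\<dots> \<le> t powr (1 + r)"
    by (rule powr_mono') (use assms in simp_all)
  finally show ?thesis .
qed simp

lemma quadratic_terms_le:
  fixes \<mu> a b t G s K M c :: real
  assumes \<mu>: "0 \<le> \<mu>" "\<mu> \<le> G * t" and a: "0 \<le> a" "a \<le> c * t" and b: "0 \<le> b" "b \<le> (1 + c) * t"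
    and nonneg: "0 \<le> s" "0 \<le> K" "0 \<le> M" "0 \<le> c" "0 \<le> t"
  shows "\<mu> * s * a + K * M * a^2 + M * K * a * b
         \<le> (G * s * c + K * M * c^2 + M * K * c * (1 + c)) * t^2"
proof -
  have "(\<mu> * a) * s \<le> ((G * t) * (c * t)) * s"
    using \<mu> a nonneg by (intro mult_right_mono mult_mono) simp_all
  moreover have "(K * M) * a^2 \<le> (K * M) * (c * t)^2"
    using a nonneg by (intro mult_left_mono power_mono) simp_all
  moreover have "(M * K) * (a * b) \<le> (M * K) * ((c * t) * ((1 + c) * t))"
    using a b nonneg by (intro mult_left_mono mult_mono) simp_all
  ultimately show ?thesis
    by (simp add: power2_eq_square algebra_simps)
qed

locale lmmss_local =
  fixes F :: "real^'n \<Rightarrow> real^'m" and J :: "real^'n \<Rightarrow> real^'n^'m" and L :: "real^'n^'p"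
    and xs :: "real^'n" and \<gamma> \<delta> L0 \<omega> r C :: real
  assumes F_deriv: "\<And>x. (F has_derivative (\<lambda>h. J x *v h)) (at x)"
    and J_cont: "continuous_on UNIV J"
    and xs_in: "xs \<in> Xstar F J"
    and regular: "\<gamma> > 0"
      "\<And>x v. x \<in> cball xs \<delta> \<Longrightarrow> norm (J x *v v)^2 + norm (L *v v)^2 \<ge> \<gamma> * norm v ^ 2"
    and lipschitz: "0 < \<delta>" "L0 > 0"
      "\<And>x y. x \<in> cball xs \<delta> \<Longrightarrow> y \<in> cball xs \<delta> \<Longrightarrow> specnorm (J x - J y) \<le> L0 * norm (x - y)"
    and error_bound: "\<omega> > 0"
      "\<And>x. x \<in> cball xs \<delta> \<Longrightarrow> \<omega> * infdist x (Xstar F J) \<le> norm (transpose (J x) *v F x)"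
    and smoothness: "0 < r" "r \<le> 1" "C \<ge> 0"
      "\<And>x z. x \<in> cball xs \<delta> \<Longrightarrow> z \<in> Xstar F J \<inter> cball xs \<delta> \<Longrightarrow>
         norm (transpose (J x - J z) *v F z) \<le> C * norm (x - z) powr (1 + r)"
    and rank_const: "\<And>x. x \<in> cball xs \<delta> \<Longrightarrow> rank (J x) = rank (J xs)"
begin

definition jac_bound :: real where "jac_bound = specnorm (J xs) + L0 * \<delta>"

definition res_bound :: real where "res_bound = norm (F xs) + jac_bound * \<delta>"

definition grad_const :: real where "grad_const = jac_bound^2 + L0 * res_bound"

lemma closed_X: "closed (Xstar F J)"
  using closed_Xstar[OF _ J_cont] F_deriv
  by (meson continuous_at_imp_continuous_on has_derivative_continuous)

lemma jac_bound_nonneg: "jac_bound \<ge> 0"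
  unfolding jac_bound_def
  by (intro add_nonneg_nonneg specnorm_nonneg mult_nonneg_nonneg) (use lipschitz in auto)

lemma grad_const_nonneg: "grad_const \<ge> 0"
proof -
  have "res_bound \<ge> 0"
    unfolding res_bound_def using jac_bound_nonneg lipschitz(1) by simp
  then show ?thesis
    unfolding grad_const_def using lipschitz(2) by simp
qed

lemma specnorm_J_le:
  assumes "z \<in> cball xs \<delta>"
  shows "specnorm (J z) \<le> jac_bound"
proof -
  have "specnorm (J z) \<le> specnorm (J xs) + specnorm (J z - J xs)"
    using specnorm_add_le[of "J xs" "J z - J xs"] by simp
  also have "specnorm (J z - J xs) \<le> L0 * \<delta>"
    using lipschitz(3)[OF assms, of xs] assms lipschitz(1,2)
    by (smt (verit) centre_in_cball dist_norm mem_cball mult_left_mono norm_minus_commute)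
  finally show ?thesis
    by (simp add: jac_bound_def)
qed

lemma norm_F_le:
  assumes "z \<in> cball xs \<delta>"
  shows "norm (F z) \<le> res_bound"
proof -
  have "norm (F z - F xs) \<le> jac_bound * norm (z - xs)"
    using lipschitz(1) assms
    by (intro lipschitz_of_jacobian_bound[OF F_deriv convex_cball _ _ specnorm_J_le]) simp_all
  also have "\<dots> \<le> jac_bound * \<delta>"
    using assms jac_bound_nonneg by (intro mult_left_mono) (auto simp: dist_norm norm_minus_commute)
  finally show ?thesis
    unfolding res_bound_def by (smt (verit) norm_triangle_ineq2)
qed

lemma nearest_stationary_point:
  assumes "x \<in> cball xs (\<delta> / 2)"
  obtains xb where "xb \<in> Xstar F J \<inter> cball xs \<delta>" "infdist x (Xstar F J) = norm (x - xb)"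
  using infdist_attained_near[OF closed_X xs_in assms] by (auto simp: dist_norm)

lemma norm_gradient_le_infdist:
  assumes x: "x \<in> cball xs (\<delta> / 2)"
  shows "norm (transpose (J x) *v F x) \<le> grad_const * infdist x (Xstar F J)"
proof -
  obtain xb where xb: "xb \<in> Xstar F J \<inter> cball xs \<delta>" "infdist x (Xstar F J) = norm (x - xb)"
    using nearest_stationary_point[OF x] .
  have x\<delta>: "x \<in> cball xs \<delta>"
    using x lipschitz(1) by auto
  have "norm (transpose (J x) *v F x) \<le> (jac_bound^2 + L0 * res_bound) * norm (x - xb)"
  proof (rule norm_gradient_le_dist_stationary[OF F_deriv convex_cball x\<delta>])
    show "xb \<in> cball xs \<delta>"
      using xb(1) by blast
    show "specnorm (J z) \<le> jac_bound" if "z \<in> cball xs \<delta>" for z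
      using specnorm_J_le[OF that] .
    show "specnorm (J x - J xb) \<le> L0 * norm (x - xb)"
      using lipschitz(3)[OF x\<delta>] xb(1) by blast
    show "norm (F xb) \<le> res_bound"
      using norm_F_le xb(1) by blast
    show "transpose (J xb) *v F xb = 0"
      using xb(1) by (simp add: Xstar_def del: transpose_matrix_vector)
  qed
  with xb(2) show ?thesis
    by (simp add: grad_const_def)
qed

text \<open>Collects the coefficients of the five terms of norm_gradient_after_step_le once
  the step is bounded by c times the distance to X*.\<close>

definition contraction_const :: "real \<Rightarrow> real" where
  "contraction_const c =
     (grad_const * specnorm L^2 * c + jac_bound * L0 * c^2 + L0 * jac_bound * c * (1 + c)
      + C * (1 + c) powr (1 + r) + C) / \<omega>"

lemma contraction_const_nonneg: "c \<ge> 0 \<Longrightarrow> contraction_const c \<ge> 0"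
  unfolding contraction_const_def
  using grad_const_nonneg jac_bound_nonneg lipschitz(2) smoothness(3) error_bound(1) by simp

lemma smoothness_terms_le:
  assumes x: "x \<in> cball xs \<delta>" and y: "y \<in> cball xs \<delta>" and xb: "xb \<in> Xstar F J \<inter> cball xs \<delta>"
    and c: "c \<ge> 0" "norm (y - xb) \<le> (1 + c) * norm (x - xb)"
  shows "norm (transpose (J y - J xb) *v F xb) + norm (transpose (J x - J xb) *v F xb)
         \<le> (C * (1 + c) powr (1 + r) + C) * norm (x - xb) powr (1 + r)"
proof -
  have "norm (transpose (J y - J xb) *v F xb) \<le> C * norm (y - xb) powr (1 + r)"
    using smoothness(4)[OF y xb] .
  also have "\<dots> \<le> C * ((1 + c) * norm (x - xb)) powr (1 + r)"
    using c smoothness by (intro mult_left_mono powr_mono2) simp_all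
  also have "\<dots> = C * (1 + c) powr (1 + r) * norm (x - xb) powr (1 + r)"
    using c(1) by (simp add: powr_mult)
  finally show ?thesis
    using smoothness(4)[OF x xb] by (simp add: algebra_simps)
qed

lemma norm_gradient_after_step_le_infdist:
  assumes x: "x \<in> cball xs (\<delta> / 2)" and y: "y \<in> cball xs (\<delta> / 2)"
    and step: "lmmss_step F J L (norm (transpose (J x) *v F x)) x d y"
    and c: "c \<ge> 0" "norm d \<le> c * infdist x (Xstar F J)"
    and t1: "infdist x (Xstar F J) \<le> 1"
  shows "norm (transpose (J y) *v F y) \<le> \<omega> * contraction_const c * infdist x (Xstar F J) powr (1 + r)"
proof -
  define t where "t = infdist x (Xstar F J)"
  define \<mu> where "\<mu> = norm (transpose (J x) *v F x)"
  obtain xb where xb: "xb \<in> Xstar F J \<inter> cball xs \<delta>" "t = norm (x - xb)"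
    using nearest_stationary_point[OF x] unfolding t_def .
  have x\<delta>: "x \<in> cball xs \<delta>" and y\<delta>: "y \<in> cball xs \<delta>"
    using x y lipschitz(1) by auto
  have t: "0 \<le> t" "t^2 \<le> t powr (1 + r)"
    using power2_le_powr[OF _ t1 smoothness(2)] by (simp_all add: t_def infdist_nonneg)
  have normal: "transpose (J x) *v (J x *v d) + \<mu> *\<^sub>R (transpose L *v (L *v d))
                  = - (transpose (J x) *v F x)" and yd: "y = x + d"
    using step unfolding lmmss_step_def \<mu>_def
    by (simp_all only: matrix_vector_mult_add_rdistrib scaleR_matrix_vector_assoc matrix_vector_mul_assoc)
  have \<mu>: "0 \<le> \<mu>" "\<mu> \<le> grad_const * t"
    using norm_gradient_le_infdist[OF x] by (simp_all add: \<mu>_def t_def)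
  have d: "norm d \<le> c * t"
    using c(2) by (simp add: t_def)
  have y_xb: "norm (y - xb) \<le> (1 + c) * t"
    using norm_triangle_ineq[of "x - xb" d] yd xb(2) d by (simp add: algebra_simps)
  let ?A = "grad_const * specnorm L^2 * c + jac_bound * L0 * c^2 + L0 * jac_bound * c * (1 + c)"
  let ?B = "C * (1 + c) powr (1 + r) + C"
  have "norm (transpose (J y) *v F y)
      \<le> \<mu> * specnorm L^2 * norm d + jac_bound * L0 * norm d^2
        + norm (transpose (J y - J xb) *v F xb) + norm (transpose (J x - J xb) *v F xb)
        + L0 * jac_bound * norm d * norm (y - xb)"
    using xb(1) lipschitz(2)
    by (intro norm_gradient_after_step_le[OF F_deriv convex_cball x\<delta> y\<delta> _ lipschitz(3) _
          specnorm_J_le normal \<mu>(1) yd]) auto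
  also have "\<dots> \<le> ?A * t^2 + ?B * t powr (1 + r)"
    using quadratic_terms_le[where s = "specnorm L^2" and K = jac_bound and M = L0,
        OF \<mu> norm_ge_zero d norm_ge_zero y_xb zero_le_power2 jac_bound_nonneg
        less_imp_le[OF lipschitz(2)] c(1) t(1)]
      smoothness_terms_le[OF x\<delta> y\<delta> xb(1) c(1)] y_xb xb(2)
    by (simp add: algebra_simps)
  also have "\<dots> \<le> ?A * t powr (1 + r) + ?B * t powr (1 + r)"
    using grad_const_nonneg jac_bound_nonneg lipschitz(2) c(1)
    by (intro add_right_mono mult_left_mono[OF t(2)]) simp
  also have "\<dots> = \<omega> * contraction_const c * t powr (1 + r)"
    using error_bound(1) by (simp add: contraction_const_def field_simps)
  finally show ?thesis
    by (simp add: t_def)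
qed

lemma infdist_step_le:
  assumes "x \<in> cball xs (\<delta> / 2)" and y: "y \<in> cball xs (\<delta> / 2)"
    and "lmmss_step F J L (norm (transpose (J x) *v F x)) x d y"
    and "c \<ge> 0" "norm d \<le> c * infdist x (Xstar F J)" "infdist x (Xstar F J) \<le> 1"
  shows "infdist y (Xstar F J) \<le> contraction_const c * infdist x (Xstar F J) powr (1 + r)"
proof -
  have "\<omega> * infdist y (Xstar F J) \<le> \<omega> * contraction_const c * infdist x (Xstar F J) powr (1 + r)"
    using error_bound(2)[of y] y lipschitz(1) norm_gradient_after_step_le_infdist[OF assms] by auto
  then show ?thesis
    using error_bound(1) by (simp add: mult.assoc)
qed

lemma local_step_estimates:
  obtains \<rho> c where "0 < \<rho>" "\<rho> \<le> \<delta> / 2" "c \<ge> 0"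
    "\<And>x d y. x \<in> cball xs \<rho> \<Longrightarrow> lmmss_step F J L (norm (transpose (J x) *v F x)) x d y \<Longrightarrow>
       norm d \<le> c * infdist x (Xstar F J)"
proof -
  have lip: "specnorm (J x - J xs) \<le> L0 * norm (x - xs)" if "x \<in> cball xs \<delta>" for x
    using lipschitz(3)[OF that] lipschitz(1) by simp
  obtain \<rho>1 \<sigma> where \<rho>1: "0 < \<rho>1" "\<rho>1 \<le> \<delta>" and \<sigma>: "0 < \<sigma>"
    "\<And>x a. x \<in> cball xs \<rho>1 \<Longrightarrow> \<sigma> * norm (transpose (J x) *v a) \<le> norm (J x *v (transpose (J x) *v a))"
    using constant_rank_uniform_bound[of L0 \<delta> xs J, OF lipschitz(2,1) lip rank_const] by blast
  define \<rho> where "\<rho> = min \<rho>1 (\<delta> / 2)"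
  define c where "c = (2 + specnorm L^2 / \<gamma>) / \<sigma>^2 * grad_const"
  show thesis
  proof (rule that)
    show "0 < \<rho>" "\<rho> \<le> \<delta> / 2"
      using \<rho>1 lipschitz(1) by (simp_all add: \<rho>_def)
    show "c \<ge> 0"
      using regular(1) grad_const_nonneg by (simp add: c_def)
    show "norm d \<le> c * infdist x (Xstar F J)"
      if x: "x \<in> cball xs \<rho>" and step: "lmmss_step F J L (norm (transpose (J x) *v F x)) x d y" for x d y
    proof -
      have "x \<in> cball xs \<rho>1" "x \<in> cball xs (\<delta> / 2)" "x \<in> cball xs \<delta>"
        using x \<rho>1 by (auto simp: \<rho>_def)
      then have "norm d \<le> (2 + specnorm L^2 / \<gamma>) / \<sigma>^2 * norm (transpose (J x) *v F x)"
        using regular \<sigma> by (intro lmmss_step_le[OF step]) simp_all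
      also have "\<dots> \<le> (2 + specnorm L^2 / \<gamma>) / \<sigma>^2 * (grad_const * infdist x (Xstar F J))"
        using norm_gradient_le_infdist[OF \<open>x \<in> cball xs (\<delta> / 2)\<close>] regular(1)
        by (intro mult_left_mono) simp_all
      finally show ?thesis
        by (simp add: c_def)
    qed
  qed
qed

theorem superlinear_convergence:
  shows "\<exists>\<epsilon>>0. \<exists>K. \<forall>(x :: nat \<Rightarrow> real^'n) (d :: nat \<Rightarrow> real^'n).
           (x 0 \<in> cball xs \<epsilon> \<and>
            (\<forall>k. lmmss_step F J L (norm (transpose (J (x k)) *v F (x k))) (x k) (d k) (x (Suc k))))
           \<longrightarrow> ((\<lambda>k. infdist (x k) (Xstar F J)) \<longlonglongrightarrow> 0)
             \<and> (\<forall>k. infdist (x (Suc k)) (Xstar F J) \<le> K * infdist (x k) (Xstar F J) powr (1 + r))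
             \<and> (\<exists>z \<in> Xstar F J \<inter> cball xs (\<delta> / 2). x \<longlonglongrightarrow> z)"
proof -
  obtain \<rho> c where \<rho>: "0 < \<rho>" "\<rho> \<le> \<delta> / 2" and c: "c \<ge> 0" and step_bound:
    "\<And>x d y. x \<in> cball xs \<rho> \<Longrightarrow> lmmss_step F J L (norm (transpose (J x) *v F x)) x d y \<Longrightarrow>
       norm d \<le> c * infdist x (Xstar F J)"
    using local_step_estimates by blast
  define K where "K = contraction_const c"
  obtain \<epsilon> where \<epsilon>: "\<epsilon> > 0" "(1 + 2 * c) * \<epsilon> \<le> \<rho>" "\<epsilon> \<le> 1" "2 * K * \<epsilon> powr r \<le> 1"
    using exists_small_radius[OF \<rho>(1) c contraction_const_nonneg[OF c] smoothness(1)] by (auto simp: K_def)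
  have "((\<lambda>k. infdist (x k) (Xstar F J)) \<longlonglongrightarrow> 0)
      \<and> (\<forall>k. infdist (x (Suc k)) (Xstar F J) \<le> K * infdist (x k) (Xstar F J) powr (1 + r))
      \<and> (\<exists>z \<in> Xstar F J \<inter> cball xs (\<delta> / 2). x \<longlonglongrightarrow> z)"
    if x0: "x 0 \<in> cball xs \<epsilon>"
      and steps: "\<forall>k. lmmss_step F J L (norm (transpose (J (x k)) *v F (x k))) (x k) (d k) (x (Suc k))"
    for x d
  proof -
    have ball: "cball xs \<rho> \<subseteq> cball xs (\<delta> / 2)"
      using \<rho>(2) by auto
    interpret superlinear_iteration "Xstar F J" xs x d c K r \<rho> \<epsilon>
    proof
      show "x (Suc k) = x k + d k" for k
        using steps by (simp add: lmmss_step_def)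
      show "norm (d k) \<le> c * infdist (x k) (Xstar F J)" if "x k \<in> cball xs \<rho>" for k
        using step_bound[OF that] steps by blast
      show "infdist (x (Suc k)) (Xstar F J) \<le> K * infdist (x k) (Xstar F J) powr (1 + r)"
        if "x k \<in> cball xs \<rho>" "x (Suc k) \<in> cball xs \<rho>" "infdist (x k) (Xstar F J) \<le> 1" for k
        unfolding K_def using that ball steps step_bound c
        by (intro infdist_step_le) blast+
    qed (use closed_X xs_in c contraction_const_nonneg smoothness(1) \<epsilon> x0 in \<open>auto simp: K_def\<close>)
    show ?thesis
      using dist_tendsto_zero dist_superlinear iterates_converge ball by blast
  qed
  with \<epsilon>(1) show ?thesis
    by blast
qed

end

theorem mainTheorem7:
  fixes F :: "real^'n \<Rightarrow> real^'m"
    and J :: "real^'n \<Rightarrow> real^'n^'m"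
    and J2 :: "real^'n \<Rightarrow> ((real^'n) \<Rightarrow>\<^sub>L (real^'n^'m))"
    and L :: "real^'n^'p"
    and xs :: "real^'n"
    and \<gamma> \<delta> L0 \<omega> r C :: real
  assumes dims: "CARD('n) \<le> CARD('m)"
    and F_deriv: "\<And>x. (F has_derivative (\<lambda>h. J x *v h)) (at x)"
    and J_deriv: "\<And>x. (J has_derivative blinfun_apply (J2 x)) (at x)"
    and J2_cont: "continuous_on UNIV J2"
    and L_rank: "rank L = CARD('p)"
    and xs_in: "xs \<in> Xstar F J"
    and A1: "\<gamma> > 0"
      "\<And>x v. x \<in> cball xs \<delta> \<Longrightarrow> norm (J x *v v)^2 + norm (L *v v)^2 \<ge> \<gamma> * norm v ^ 2"
    and A2: "0 < \<delta>" "\<delta> < 1" "L0 > 0"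
      "\<And>x y. x \<in> cball xs \<delta> \<Longrightarrow> y \<in> cball xs \<delta> \<Longrightarrow> specnorm (J x - J y) \<le> L0 * norm (x - y)"
    and A3: "\<omega> > 0"
      "\<And>x. x \<in> cball xs \<delta> \<Longrightarrow> \<omega> * infdist x (Xstar F J) \<le> norm (transpose (J x) *v F x)"
    and A4: "0 < r" "r \<le> 1" "C \<ge> 0"
      "\<And>x z. x \<in> cball xs \<delta> \<Longrightarrow> z \<in> Xstar F J \<inter> cball xs \<delta> \<Longrightarrow>
         norm (transpose (J x - J z) *v F z) \<le> C * norm (x - z) powr (1 + r)"
    and rank_const: "\<And>x. x \<in> cball xs \<delta> \<Longrightarrow> rank (J x) = rank (J xs)"
    and rank_pos: "rank (J xs) \<ge> 1"
  shows "\<exists>\<epsilon>>0. \<exists>K. \<forall>(x :: nat \<Rightarrow> real^'n) (d :: nat \<Rightarrow> real^'n).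
           (x 0 \<in> cball xs \<epsilon> \<and>
            (\<forall>k. lmmss_step F J L (norm (transpose (J (x k)) *v F (x k))) (x k) (d k) (x (Suc k))))
           \<longrightarrow> ((\<lambda>k. infdist (x k) (Xstar F J)) \<longlonglongrightarrow> 0)
             \<and> (\<forall>k. infdist (x (Suc k)) (Xstar F J) \<le> K * infdist (x k) (Xstar F J) powr (1 + r))
             \<and> (\<exists>z \<in> Xstar F J \<inter> cball xs (\<delta> / 2). x \<longlonglongrightarrow> z)"
proof -
  have "continuous_on UNIV J"
    using J_deriv by (meson continuous_at_imp_continuous_on has_derivative_continuous)
  then interpret lmmss_local F J L xs \<gamma> \<delta> L0 \<omega> r C
    using F_deriv xs_in A1 A2(1,3,4) A3 A4 rank_const by unfold_locales
  show ?thesis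
    by (rule superlinear_convergence)
qed

end
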